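(* Let $(X,d)$ be a Hadamard space, $\|\cdot\|$ a norm on $\mathbb R^s$, and $f:\mathbb R^s\to X$ Lipschitz with constant $C>0$, i.e. $d(f(t),f(u))\le C\|t-u\|$. Let $S$ be the barycentric scheme on $X$ of a mask $\mathbf a$ with $\operatorname{supp}(\mathbf a)\subseteq\{v\in\mathbb R^s:\|v\|\le r\}$, and suppose $S$ is convergent. For $h>0$ let $x_i=f(hi)$, $i\in\mathbb Z^s$ (assume $x$ bounded). Then $$\sup_{t\in\mathbb R^s}d\big(S^\infty x(t/h),f(t)\big)\le rCh.$$
   Context: Hadamard space: complete metric space $(X,d)$ such that for any $x_0,x_1\in X$ there is $y$ with $d(z,y)^2\le\frac12d(z,x_0)^2+\frac12d(z,x_1)^2-\frac14d(x_0,x_1)^2$ for all $z$. Mask: finitely supported nonnegative $(a_i)_{i\in\mathbb Z^s}$ with $\sum_ja_{i-2j}=1$ for all $i$. Barycentric scheme: $Sx_i=\operatorname{argmin}_{y\in X}\sum_ja_{i-2j}d^2(x_j,y)$. $S$ convergent means: for every bounded $x$ there is a continuous $S^\infty x:\mathbb R^s\to X$ with $\sup_jd(S^\infty x(j/2^n),(S^nx)_j)\to0$ as $n\to\infty$. *)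

theory Defs
  imports "HOL-Analysis.Analysis"
begin

text \<open>Hadamard space: a complete metric space (type class complete_space) satisfying
  the midpoint (CAT(0)) inequality.\<close>
definition hadamard :: "'a::complete_space itself \<Rightarrow> bool" where
  "hadamard _ \<longleftrightarrow> (\<forall>x0 x1::'a. \<exists>y. \<forall>z.
      (dist z y)\<^sup>2 \<le> (dist z x0)\<^sup>2 / 2 + (dist z x1)\<^sup>2 / 2 - (dist x0 x1)\<^sup>2 / 4)"

definition is_norm :: "(real ^ 's \<Rightarrow> real) \<Rightarrow> bool" where
  "is_norm N \<longleftrightarrow> (\<forall>v. 0 \<le> N v) \<and> (\<forall>v. N v = 0 \<longleftrightarrow> v = 0)
     \<and> (\<forall>c v. N (c *\<^sub>R v) = \<bar>c\<bar> * N v) \<and> (\<forall>u v. N (u + v) \<le> N u + N v)"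

definition vec_of_int :: "int ^ 's \<Rightarrow> real ^ 's" where
  "vec_of_int i = (\<chi> k. real_of_int (i $ k))"

definition twice :: "int ^ 's \<Rightarrow> int ^ 's" where
  "twice j = (\<chi> k. 2 * j $ k)"

definition is_mask :: "(int ^ 's \<Rightarrow> real) \<Rightarrow> bool" where
  "is_mask a \<longleftrightarrow> finite {i. a i \<noteq> 0} \<and> (\<forall>i. 0 \<le> a i)
     \<and> (\<forall>i. (\<Sum>j\<in>{j. a (i - twice j) \<noteq> 0}. a (i - twice j)) = 1)"

definition bary_step :: "(int ^ 's \<Rightarrow> real) \<Rightarrow> (int ^ 's \<Rightarrow> 'a::metric_space) \<Rightarrow> int ^ 's \<Rightarrow> 'a" where
  "bary_step a x i = (SOME y. \<forall>z.
      (\<Sum>j\<in>{j. a (i - twice j) \<noteq> 0}. a (i - twice j) * (dist (x j) y)\<^sup>2)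
      \<le> (\<Sum>j\<in>{j. a (i - twice j) \<noteq> 0}. a (i - twice j) * (dist (x j) z)\<^sup>2))"

definition is_bary_limit :: "(int ^ 's \<Rightarrow> real) \<Rightarrow> (int ^ 's \<Rightarrow> 'a::metric_space) \<Rightarrow> (real ^ 's \<Rightarrow> 'a) \<Rightarrow> bool" where
  "is_bary_limit a x F \<longleftrightarrow> continuous_on UNIV F \<and>
     (\<forall>e>0. \<forall>\<^sub>F n in sequentially. \<forall>j.
        dist (F ((1 / 2 ^ n) *\<^sub>R vec_of_int j)) ((bary_step a ^^ n) x j) \<le> e)"

definition bary_convergent :: "(int ^ 's \<Rightarrow> real) \<Rightarrow> 'a::metric_space itself \<Rightarrow> bool" where
  "bary_convergent a _ \<longleftrightarrow> (\<forall>x :: int ^ 's \<Rightarrow> 'a. bounded (range x) \<longrightarrow> (\<exists>F. is_bary_limit a x F))"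

definition bary_limit :: "(int ^ 's \<Rightarrow> real) \<Rightarrow> (int ^ 's \<Rightarrow> 'a::metric_space) \<Rightarrow> real ^ 's \<Rightarrow> 'a" where
  "bary_limit a x = (SOME F. is_bary_limit a x F)"

end

theory Submission
  imports Defs
begin

(* Put x_i = f(h i) and compare the refined data (S^n x)_j with the
   samples f(h j / 2^n) of f on the finer grid.  The key geometric fact about
   Hadamard spaces is that a weighted barycenter of points X_j all lying within
   distance R of a point z is itself within distance R of z; it is proved by
   comparing the barycenter y with points m_t on the geodesic from y to z
   (obtained at dyadic parameters t from the midpoint inequality) and letting
   t -> 0.  One subdivision step at level n moves the comparison points by at
   most C r h / 2^(n+1) (Lipschitz bound plus the support radius of the mask),
   so by induction d((S^n x)_j, f(h j / 2^n)) <= r C h (1 - 2^-n).  Finally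
   every point is a limit of dyadic grid points, and the continuity of the
   limit function S^infinity x and of f carries the bound to all of R^s. *)

section \<open>Abstract norms on R^s\<close>

lemma is_norm_minus: "is_norm N \<Longrightarrow> N (- v) = N v"
  unfolding is_norm_def by (metis abs_minus_cancel abs_one mult_1 scaleR_minus1_left)

lemma is_norm_sum_le:
  assumes "is_norm N" "finite A"
  shows "N (\<Sum>k\<in>A. g k) \<le> (\<Sum>k\<in>A. N (g k))"
  using assms(2)
proof (induction A rule: finite_induct)
  case empty
  then show ?case using assms(1) unfolding is_norm_def by (metis order_refl sum.empty)
next
  case (insert x F)
  then show ?case using assms(1) unfolding is_norm_def by (simp, smt (verit))
qed

lemma is_norm_le_euclidean:
  assumes "is_norm N"
  shows "N v \<le> norm v * (\<Sum>k\<in>UNIV. N (axis k 1))"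
proof -
  have "v = (\<Sum>k\<in>UNIV. (v $ k) *\<^sub>R axis k 1)"
    using basis_expansion[of v] by (simp add: scalar_mult_eq_scaleR)
  then have "N v \<le> (\<Sum>k\<in>UNIV. N ((v $ k) *\<^sub>R axis k 1))"
    using is_norm_sum_le[OF assms] by (metis finite)
  also have "\<dots> = (\<Sum>k\<in>UNIV. \<bar>v $ k\<bar> * N (axis k 1))"
    using assms unfolding is_norm_def by simp
  also have "\<dots> \<le> (\<Sum>k\<in>UNIV. norm v * N (axis k 1))"
    using component_le_norm_cart assms unfolding is_norm_def
    by (intro sum_mono mult_right_mono) auto
  finally show ?thesis by (simp add: sum_distrib_left)
qed

lemma is_norm_lipschitz_continuous:
  fixes f :: "real ^ 's \<Rightarrow> 'a::metric_space"
  assumes N: "is_norm N" and C: "0 \<le> C" and lip: "\<forall>t u. dist (f t) (f u) \<le> C * N (t - u)"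
  shows "continuous_on UNIV f"
proof -
  define K where "K = (\<Sum>k\<in>UNIV. N (axis k 1))"
  have K: "0 \<le> K" unfolding K_def using N unfolding is_norm_def by (simp add: sum_nonneg)
  have "(C * K)-lipschitz_on UNIV f"
  proof (rule lipschitz_onI)
    fix t u :: "real ^ 's"
    have "dist (f t) (f u) \<le> C * N (t - u)" using lip by blast
    also have "\<dots> \<le> C * (norm (t - u) * K)"
      using is_norm_le_euclidean[OF N, of "t - u"] C unfolding K_def by (intro mult_left_mono) auto
    finally show "dist (f t) (f u) \<le> C * K * dist t u" by (simp add: dist_norm algebra_simps)
  qed (use C K in simp)
  then show ?thesis by (rule lipschitz_on_continuous_on)
qed

section \<open>Geodesic points in Hadamard spaces\<close>

text \<open>m is a point at parameter t on a geodesic from y to z, certified by the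
  comparison inequality that holds for such points in a Hadamard space.\<close>
definition geodesic_point :: "'a::metric_space \<Rightarrow> 'a \<Rightarrow> real \<Rightarrow> 'a \<Rightarrow> bool" where
  "geodesic_point y z t m \<longleftrightarrow> (\<forall>x. (dist x m)\<^sup>2
      \<le> (1 - t) * (dist x y)\<^sup>2 + t * (dist x z)\<^sup>2 - t * (1 - t) * (dist y z)\<^sup>2)"

lemma geodesic_point_dist:
  assumes "geodesic_point y z t m" "0 \<le> t" "t \<le> 1"
  shows "dist y m = t * dist y z"
proof -
  let ?D = "dist y z"
  have "(dist y m)\<^sup>2 \<le> (t * ?D)\<^sup>2"
    using assms(1)[unfolded geodesic_point_def, rule_format, of y]
    by (simp add: power2_eq_square algebra_simps)
  then have ym: "dist y m \<le> t * ?D" using power2_le_imp_le assms by simp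
  have "(dist z m)\<^sup>2 \<le> ((1 - t) * ?D)\<^sup>2"
    using assms(1)[unfolded geodesic_point_def, rule_format, of z]
    by (simp add: dist_commute power2_eq_square algebra_simps)
  then have zm: "dist z m \<le> (1 - t) * ?D" using power2_le_imp_le assms by simp
  have "?D \<le> dist y m + dist z m" using dist_triangle[of y z m] by (simp add: dist_commute)
  with ym zm show ?thesis by (simp add: algebra_simps)
qed

text \<open>Repeated midpoints towards y give geodesic points at all dyadic parameters 2^-k.\<close>
lemma geodesic_point_dyadic:
  assumes H: "hadamard TYPE('a::complete_space)"
  shows "\<exists>m. geodesic_point y z (1 / 2 ^ k) (m::'a)"
proof (induction k)
  case 0
  show ?case by (rule exI[of _ z]) (simp add: geodesic_point_def)
next
  case (Suc k)
  let ?t = "1 / 2 ^ k :: real"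
  from Suc obtain m where m: "geodesic_point y z ?t m" by blast
  have ym: "dist y m = ?t * dist y z" using geodesic_point_dist[OF m] by simp
  obtain p where p: "\<forall>x. (dist x p)\<^sup>2 \<le> (dist x y)\<^sup>2 / 2 + (dist x m)\<^sup>2 / 2 - (dist y m)\<^sup>2 / 4"
    using H unfolding hadamard_def by blast
  have "geodesic_point y z (1 / 2 ^ Suc k) p"
    unfolding geodesic_point_def
  proof
    fix x
    have "(dist x p)\<^sup>2 \<le> (dist x y)\<^sup>2 / 2 + (dist x m)\<^sup>2 / 2 - (dist y m)\<^sup>2 / 4" using p by blast
    also have "\<dots> \<le> (dist x y)\<^sup>2 / 2 + ((1 - ?t) * (dist x y)\<^sup>2 + ?t * (dist x z)\<^sup>2
        - ?t * (1 - ?t) * (dist y z)\<^sup>2) / 2 - (?t * dist y z)\<^sup>2 / 4"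
      using m[unfolded geodesic_point_def, rule_format, of x] ym by simp
    also have "\<dots> = (1 - 1 / 2 ^ Suc k) * (dist x y)\<^sup>2 + (1 / 2 ^ Suc k) * (dist x z)\<^sup>2
        - (1 / 2 ^ Suc k) * (1 - 1 / 2 ^ Suc k) * (dist y z)\<^sup>2"
      by (simp add: field_simps power2_eq_square)
    finally show "(dist x p)\<^sup>2 \<le> (1 - 1 / 2 ^ Suc k) * (dist x y)\<^sup>2 + (1 / 2 ^ Suc k) * (dist x z)\<^sup>2
        - (1 / 2 ^ Suc k) * (1 - 1 / 2 ^ Suc k) * (dist y z)\<^sup>2" .
  qed
  then show ?case by blast
qed

lemma dyadic_tendsto_zero: "(\<lambda>k. 1 / (2::real) ^ k) \<longlonglongrightarrow> 0"
  using LIMSEQ_inverse_realpow_zero[of "2::real"] by (simp add: inverse_eq_divide)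

section \<open>Weighted barycenters\<close>

definition energy :: "('b \<Rightarrow> real) \<Rightarrow> 'b set \<Rightarrow> ('b \<Rightarrow> 'a::metric_space) \<Rightarrow> 'a \<Rightarrow> real" where
  "energy w J X y = (\<Sum>j\<in>J. w j * (dist (X j) y)\<^sup>2)"

lemma energy_nonneg: "\<forall>j\<in>J. 0 \<le> w j \<Longrightarrow> 0 \<le> energy w J X y"
  unfolding energy_def by (simp add: sum_nonneg)

lemma energy_comparison:
  assumes w0: "\<forall>j\<in>J. 0 \<le> w j" and w1: "(\<Sum>j\<in>J. w j) = 1"
    and cmp: "\<forall>x. (dist x p)\<^sup>2 \<le> \<alpha> * (dist x y)\<^sup>2 + \<beta> * (dist x z)\<^sup>2 - \<gamma>"
  shows "energy w J X p \<le> \<alpha> * energy w J X y + \<beta> * energy w J X z - \<gamma>"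
proof -
  have const: "(\<Sum>j\<in>J. w j * c) = c" for c :: real using w1 by (simp add: sum_distrib_right[symmetric])
  have "energy w J X p \<le> (\<Sum>j\<in>J. w j * (\<alpha> * (dist (X j) y)\<^sup>2 + \<beta> * (dist (X j) z)\<^sup>2 - \<gamma>))"
    unfolding energy_def using w0 cmp by (intro sum_mono mult_left_mono) auto
  also have "\<dots> = (\<Sum>j\<in>J. \<alpha> * (w j * (dist (X j) y)\<^sup>2) + \<beta> * (w j * (dist (X j) z)\<^sup>2) - w j * \<gamma>)"
    by (rule sum.cong) (simp_all add: algebra_simps)
  also have "\<dots> = \<alpha> * energy w J X y + \<beta> * energy w J X z - \<gamma>"
    unfolding energy_def by (simp only: sum.distrib sum_subtractf sum_distrib_left[symmetric] const)
  finally show ?thesis .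
qed

text \<open>Existence of barycenters: by the midpoint inequality a minimising sequence
  of the energy is Cauchy, and its limit is a minimiser by completeness.\<close>
lemma barycenter_exists:
  fixes X :: "'b \<Rightarrow> 'a::complete_space"
  assumes H: "hadamard TYPE('a)" and w0: "\<forall>j\<in>J. 0 \<le> w j" and w1: "(\<Sum>j\<in>J. w j) = 1"
  shows "\<exists>y. \<forall>z. energy w J X y \<le> energy w J X z"
proof -
  define G where "G = energy w J X"
  define g where "g = Inf (range G)"
  have bdd: "bdd_below (range G)"
    using energy_nonneg[OF w0] unfolding G_def by (metis bdd_belowI2)
  have g_le: "g \<le> G y" for y unfolding g_def using bdd by (simp add: cInf_lower)
  have "\<exists>y. G y < g + 1 / (real n + 1)" for n
    using cInf_lessD[of "range G" "g + 1 / (real n + 1)"] unfolding g_def by (auto simp: add_pos_pos)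
  then obtain ys where ys: "\<And>n. G (ys n) < g + 1 / (real n + 1)" by metis
  have gap: "(dist y1 y2)\<^sup>2 \<le> 2 * (G y1 - g) + 2 * (G y2 - g)" for y1 y2
  proof -
    obtain p where "\<forall>x. (dist x p)\<^sup>2 \<le> 1/2 * (dist x y1)\<^sup>2 + 1/2 * (dist x y2)\<^sup>2 - (dist y1 y2)\<^sup>2 / 4"
      using H unfolding hadamard_def by fastforce
    then have "G p \<le> 1/2 * G y1 + 1/2 * G y2 - (dist y1 y2)\<^sup>2 / 4"
      unfolding G_def by (rule energy_comparison[OF w0 w1])
    with g_le[of p] show ?thesis by simp
  qed
  have "Cauchy ys"
  proof (rule metric_CauchyI)
    fix e :: real assume e: "0 < e"
    obtain M :: nat where M: "4 / e\<^sup>2 < real M" using reals_Archimedean2 by blast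
    have "dist (ys m) (ys n) < e" if mn: "M \<le> m" "M \<le> n" for m n
    proof -
      have e2: "0 < e\<^sup>2" using e by simp
      have Mpos: "0 < real M" using M e2 by (smt (verit) divide_pos_pos)
      have "1 / (real m + 1) < 1 / real M" "1 / (real n + 1) < 1 / real M"
        using mn Mpos by (simp_all add: frac_less2)
      then have "(dist (ys m) (ys n))\<^sup>2 < 4 * (1 / real M)"
        using gap[of "ys m" "ys n"] ys[of m] ys[of n] by argo
      also have "\<dots> < e\<^sup>2" using M e2 Mpos by (simp add: field_simps)
      finally show ?thesis using e by (smt (verit) power_mono zero_le_dist)
    qed
    then show "\<exists>M. \<forall>m\<ge>M. \<forall>n\<ge>M. dist (ys m) (ys n) < e" by blast
  qed
  then obtain y where y: "ys \<longlonglongrightarrow> y" using Cauchy_convergent_iff convergent_def by blast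
  have "(\<lambda>n. G (ys n)) \<longlonglongrightarrow> G y" unfolding G_def energy_def by (intro tendsto_intros y)
  moreover have "(\<lambda>n. g + 1 / (real n + 1)) \<longlonglongrightarrow> g + 0"
    by (intro tendsto_intros)
       (use LIMSEQ_inverse_real_of_nat in \<open>simp add: inverse_eq_divide add.commute\<close>)
  ultimately have "G y \<le> g + 0" by (rule LIMSEQ_le) (use ys less_imp_le in blast)
  then show ?thesis using g_le unfolding G_def by (metis add_0_right order_trans)
qed

text \<open>Comparing y with the geodesic point at parameter t from y to z
  gives (1 - t) d(y,z)^2 <= R^2; let t = 2^-k tend to 0.\<close>
lemma barycenter_dist_le:
  fixes X :: "'b \<Rightarrow> 'a::complete_space"
  assumes H: "hadamard TYPE('a)" and w0: "\<forall>j\<in>J. 0 \<le> w j" and w1: "(\<Sum>j\<in>J. w j) = 1"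
    and y_min: "\<forall>z. energy w J X y \<le> energy w J X z"
    and R: "\<forall>j\<in>J. dist (X j) z \<le> R"
  shows "dist y z \<le> R"
proof -
  let ?D = "dist y z" and ?G = "energy w J X y" and ?Q = "energy w J X z"
  obtain j0 where "j0 \<in> J" using w1 by force
  then have R0: "0 \<le> R" using R by (meson dual_order.trans zero_le_dist)
  have "?Q \<le> (\<Sum>j\<in>J. w j * R\<^sup>2)"
    unfolding energy_def using w0 R by (intro sum_mono mult_left_mono power_mono) auto
  then have QR: "?Q \<le> R\<^sup>2" using w1 by (simp add: sum_distrib_right[symmetric])
  have bound: "(1 - 1 / 2 ^ k) * ?D\<^sup>2 \<le> R\<^sup>2" for k :: nat
  proof -
    let ?t = "1 / 2 ^ k :: real"
    obtain m where "geodesic_point y z ?t m" using geodesic_point_dyadic[OF H] by blast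
    then have "energy w J X m \<le> (1 - ?t) * ?G + ?t * ?Q - ?t * (1 - ?t) * ?D\<^sup>2"
      unfolding geodesic_point_def by (rule energy_comparison[OF w0 w1])
    then have "?t * ?G \<le> ?t * (?Q - (1 - ?t) * ?D\<^sup>2)"
      using y_min by (simp add: algebra_simps) (smt (verit))
    then have "?G \<le> ?Q - (1 - ?t) * ?D\<^sup>2" by (rule mult_left_le_imp_le) simp
    then show ?thesis using energy_nonneg[OF w0, of X y] QR by linarith
  qed
  have "(\<lambda>k. (1 - 1 / 2 ^ k) * ?D\<^sup>2) \<longlonglongrightarrow> (1 - 0) * ?D\<^sup>2"
    by (intro tendsto_intros dyadic_tendsto_zero)
  then have "?D\<^sup>2 \<le> R\<^sup>2" using bound by (simp add: Lim_bounded)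
  then show ?thesis using R0 power2_le_imp_le by blast
qed

section \<open>Masks and one step of the scheme\<close>

definition stencil :: "(int ^ 's \<Rightarrow> real) \<Rightarrow> int ^ 's \<Rightarrow> (int ^ 's) set" where
  "stencil a i = {j. a (i - twice j) \<noteq> 0}"

lemma mask_weights:
  assumes "is_mask a"
  shows "\<forall>j\<in>stencil a i. 0 \<le> a (i - twice j)" "(\<Sum>j\<in>stencil a i. a (i - twice j)) = 1"
  using assms unfolding is_mask_def stencil_def by blast+

text \<open>A nonempty support forces the support radius to be nonnegative.\<close>
lemma mask_radius_nonneg:
  assumes "is_mask a" "is_norm N" "\<forall>i. a i \<noteq> 0 \<longrightarrow> N (vec_of_int i) \<le> r"
  shows "0 \<le> r"
proof -
  obtain j where "j \<in> stencil a 0" using mask_weights(2)[OF assms(1), of 0] by force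
  then have "N (vec_of_int (0 - twice j)) \<le> r" using assms(3) unfolding stencil_def by blast
  then show ?thesis using assms(2) unfolding is_norm_def by (meson order_trans)
qed

lemma bary_step_minimises:
  fixes X :: "int ^ 's \<Rightarrow> 'a::complete_space"
  assumes "hadamard TYPE('a)" "is_mask a"
  shows "\<forall>z. energy (\<lambda>j. a (i - twice j)) (stencil a i) X (bary_step a X i)
           \<le> energy (\<lambda>j. a (i - twice j)) (stencil a i) X z"
  using someI_ex[OF barycenter_exists[OF assms(1) mask_weights[OF assms(2)]]]
  unfolding bary_step_def energy_def stencil_def .

lemma vec_of_int_minus_twice: "vec_of_int (i - twice j) = vec_of_int i - 2 *\<^sub>R vec_of_int j"
  by (simp add: vec_eq_iff vec_of_int_def twice_def)

text \<open>Error propagation of one step: if the data X are E-close to f on the grid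
  of spacing \<delta>, then S X is (E + C r \<delta>/2)-close to f on the grid of spacing \<delta>/2,
  because the points of the stencil of i lie within \<delta> r/2 of (\<delta>/2) i.\<close>
lemma bary_step_error:
  fixes X :: "int ^ 's \<Rightarrow> 'a::complete_space" and f :: "real ^ 's \<Rightarrow> 'a"
  assumes H: "hadamard TYPE('a)" and N: "is_norm N" and C: "0 \<le> C"
    and lip: "\<forall>t u. dist (f t) (f u) \<le> C * N (t - u)"
    and a: "is_mask a" and supp: "\<forall>i. a i \<noteq> 0 \<longrightarrow> N (vec_of_int i) \<le> r"
    and \<delta>: "0 \<le> \<delta>" and close: "\<forall>j. dist (X j) (f (\<delta> *\<^sub>R vec_of_int j)) \<le> E"
  shows "dist (bary_step a X i) (f ((\<delta> / 2) *\<^sub>R vec_of_int i)) \<le> E + C * (\<delta> / 2 * r)"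
proof (rule barycenter_dist_le[OF H mask_weights[OF a] bary_step_minimises[OF H a]], intro ballI)
  fix j assume j: "j \<in> stencil a i"
  have "\<delta> *\<^sub>R vec_of_int j - (\<delta> / 2) *\<^sub>R vec_of_int i = (- (\<delta> / 2)) *\<^sub>R vec_of_int (i - twice j)"
    by (simp add: vec_of_int_minus_twice vec_eq_iff field_simps)
  then have "N (\<delta> *\<^sub>R vec_of_int j - (\<delta> / 2) *\<^sub>R vec_of_int i) = \<delta> / 2 * N (vec_of_int (i - twice j))"
    using N \<delta> is_norm_minus[OF N] unfolding is_norm_def by simp
  also have "\<dots> \<le> \<delta> / 2 * r" using j supp \<delta> unfolding stencil_def by (intro mult_left_mono) auto
  finally have "dist (f (\<delta> *\<^sub>R vec_of_int j)) (f ((\<delta> / 2) *\<^sub>R vec_of_int i)) \<le> C * (\<delta> / 2 * r)"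
    using lip C by (meson mult_left_mono order_trans)
  then show "dist (X j) (f ((\<delta> / 2) *\<^sub>R vec_of_int i)) \<le> E + C * (\<delta> / 2 * r)"
    using close dist_triangle[of "X j" _ "f (\<delta> *\<^sub>R vec_of_int j)"] by (smt (verit))
qed

text \<open>Summing the geometric series of one-step errors: after n steps the refined
  data are r C h (1 - 2^-n)-close to the samples of f on the grid h 2^-n Z^s.\<close>
lemma bary_iterate_error:
  fixes f :: "real ^ 's \<Rightarrow> 'a::complete_space"
  assumes H: "hadamard TYPE('a)" and N: "is_norm N" and C: "0 \<le> C"
    and lip: "\<forall>t u. dist (f t) (f u) \<le> C * N (t - u)"
    and a: "is_mask a" and supp: "\<forall>i. a i \<noteq> 0 \<longrightarrow> N (vec_of_int i) \<le> r" and h: "0 \<le> h"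
  shows "dist ((bary_step a ^^ n) (\<lambda>i. f (h *\<^sub>R vec_of_int i)) i) (f ((h / 2 ^ n) *\<^sub>R vec_of_int i))
           \<le> r * C * h * (1 - 1 / 2 ^ n)"
proof (induction n arbitrary: i)
  case 0
  show ?case by simp
next
  case (Suc n)
  have "dist ((bary_step a ^^ Suc n) (\<lambda>i. f (h *\<^sub>R vec_of_int i)) i) (f ((h / 2 ^ n / 2) *\<^sub>R vec_of_int i))
          \<le> r * C * h * (1 - 1 / 2 ^ n) + C * (h / 2 ^ n / 2 * r)"
    using bary_step_error[OF H N C lip a supp _ allI[OF Suc.IH]] h by simp
  also have "\<dots> = r * C * h * (1 - 1 / 2 ^ Suc n)" by (simp add: field_simps)
  finally show ?case by (simp add: mult.commute)
qed

section \<open>Passing to the limit function\<close>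

lemma bary_limit_is_limit:
  assumes "bary_convergent a TYPE('a::metric_space)" "bounded (range (x :: int ^ 's \<Rightarrow> 'a))"
  shows "is_bary_limit a x (bary_limit a x)"
proof -
  obtain F where "is_bary_limit a x F" using assms unfolding bary_convergent_def by blast
  then show ?thesis unfolding bary_limit_def by (rule someI[where P = "is_bary_limit a x"])
qed

lemma dyadic_grid_approx:
  "(\<lambda>n. (1 / 2 ^ n) *\<^sub>R vec_of_int (\<chi> k. \<lfloor>2 ^ n * s $ k\<rfloor>)) \<longlonglongrightarrow> (s :: real ^ 's)"
proof (rule vec_tendstoI)
  fix k
  let ?u = "\<lambda>n. ((1 / 2 ^ n) *\<^sub>R vec_of_int (\<chi> k. \<lfloor>2 ^ n * s $ k\<rfloor>)) $ k"
  have u: "?u n = real_of_int \<lfloor>2 ^ n * s $ k\<rfloor> / 2 ^ n" for n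
    by (simp add: vec_of_int_def)
  have lo: "s $ k - 1 / 2 ^ n \<le> ?u n" for n
  proof -
    have "(2 ^ n * s $ k - 1) / 2 ^ n \<le> real_of_int \<lfloor>2 ^ n * s $ k\<rfloor> / 2 ^ n"
      by (rule divide_right_mono) (linarith, simp)
    moreover have "(2 ^ n * s $ k - 1) / 2 ^ n = s $ k - 1 / 2 ^ n" by (simp add: diff_divide_distrib)
    ultimately show ?thesis unfolding u by simp
  qed
  have hi: "?u n \<le> s $ k" for n
  proof -
    have "real_of_int \<lfloor>2 ^ n * s $ k\<rfloor> / 2 ^ n \<le> 2 ^ n * s $ k / 2 ^ n"
      by (rule divide_right_mono) (linarith, simp)
    then show ?thesis unfolding u by simp
  qed
  have lim: "(\<lambda>n. s $ k - 1 / 2 ^ n) \<longlonglongrightarrow> s $ k"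
    using tendsto_diff[OF tendsto_const dyadic_tendsto_zero, of "s $ k"] by simp
  show "?u \<longlonglongrightarrow> s $ k"
    by (rule tendsto_sandwich[OF always_eventually always_eventually lim tendsto_const])
       (use lo hi in blast)+
qed

lemma continuous_bound_from_sequence:
  fixes \<phi> :: "'b::topological_space \<Rightarrow> real"
  assumes "continuous_on UNIV \<phi>" "u \<longlonglongrightarrow> s"
    and "\<And>e. e > 0 \<Longrightarrow> \<forall>\<^sub>F n in sequentially. \<phi> (u n) \<le> B + e"
  shows "\<phi> s \<le> B"
proof (rule field_le_epsilon)
  fix e :: real assume "0 < e"
  have "(\<lambda>n. \<phi> (u n)) \<longlonglongrightarrow> \<phi> s"
    using continuous_on_tendsto_compose[OF assms(1,2)] by (simp add: o_def)
  then show "\<phi> s \<le> B + e" using assms(3)[OF \<open>0 < e\<close>] by (rule tendsto_upperbound) simp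
qed

text \<open>The limit function inherits uniform bounds from the refined data: if
  every (S^n x)_j stays within B of the value of a continuous G at j/2^n, then
  the limit function stays within B of G everywhere (the grid points j/2^n
  become dense as n grows).\<close>
lemma bary_limit_dist_le:
  fixes x :: "int ^ 's \<Rightarrow> 'a::metric_space" and G :: "real ^ 's \<Rightarrow> 'a"
  assumes F: "is_bary_limit a x F" and G: "continuous_on UNIV G"
    and close: "\<And>n j. dist ((bary_step a ^^ n) x j) (G ((1 / 2 ^ n) *\<^sub>R vec_of_int j)) \<le> B"
  shows "dist (F s) (G s) \<le> B"
proof -
  define \<phi> where "\<phi> v = dist (F v) (G v)" for v
  have \<phi>_cont: "continuous_on UNIV \<phi>"
    using F G unfolding \<phi>_def is_bary_limit_def by (intro continuous_on_dist) auto
  have grid: "\<forall>\<^sub>F n in sequentially. \<forall>j. \<phi> ((1 / 2 ^ n) *\<^sub>R vec_of_int j) \<le> B + e"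
    if "e > 0" for e
  proof -
    have "\<forall>\<^sub>F n in sequentially. \<forall>j. dist (F ((1 / 2 ^ n) *\<^sub>R vec_of_int j)) ((bary_step a ^^ n) x j) \<le> e"
      using F that unfolding is_bary_limit_def by blast
    then show ?thesis
    proof (rule eventually_mono, intro allI)
      fix n j
      assume "\<forall>j. dist (F ((1 / 2 ^ n) *\<^sub>R vec_of_int j)) ((bary_step a ^^ n) x j) \<le> e"
      then show "\<phi> ((1 / 2 ^ n) *\<^sub>R vec_of_int j) \<le> B + e"
        using close[of n j] dist_triangle[of "F ((1 / 2 ^ n) *\<^sub>R vec_of_int j)" _ "(bary_step a ^^ n) x j"]
        unfolding \<phi>_def by (smt (verit))
    qed
  qed
  have "\<phi> s \<le> B"
  proof (rule continuous_bound_from_sequence[OF \<phi>_cont dyadic_grid_approx])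
    fix e :: real assume "0 < e"
    with grid show "\<forall>\<^sub>F n in sequentially. \<phi> ((1 / 2 ^ n) *\<^sub>R vec_of_int (\<chi> k. \<lfloor>2 ^ n * s $ k\<rfloor>)) \<le> B + e"
      by (blast intro: eventually_mono)
  qed
  then show ?thesis unfolding \<phi>_def .
qed

theorem mainTheorem8:
  fixes N :: "real ^ 's \<Rightarrow> real"
    and f :: "real ^ 's \<Rightarrow> 'a::complete_space"
    and a :: "int ^ 's \<Rightarrow> real"
    and C r h :: real
  assumes "hadamard TYPE('a)"
    and "is_norm N"
    and "C > 0"
    and "\<forall>t u. dist (f t) (f u) \<le> C * N (t - u)"
    and "is_mask a"
    and "\<forall>i. a i \<noteq> 0 \<longrightarrow> N (vec_of_int i) \<le> r"
    and "bary_convergent a TYPE('a)"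
    and "h > 0"
    and "bounded (range (\<lambda>i. f (h *\<^sub>R vec_of_int i)))"
  shows "\<forall>t. dist (bary_limit a (\<lambda>i. f (h *\<^sub>R vec_of_int i)) ((1 / h) *\<^sub>R t)) (f t) \<le> r * C * h"
proof
  fix t :: "real ^ 's"
  define x where "x = (\<lambda>i. f (h *\<^sub>R vec_of_int i))"
  have C: "0 \<le> C" and h: "0 \<le> h" using assms(3,8) by simp_all
  have "0 \<le> r * C * h" using mask_radius_nonneg[OF assms(5,2,6)] C h by simp
  then have "r * C * h * (1 - 1 / 2 ^ n) \<le> r * C * h" for n :: nat by (intro mult_left_le) simp_all
  then have error: "dist ((bary_step a ^^ n) x j) (f (h *\<^sub>R ((1 / 2 ^ n) *\<^sub>R vec_of_int j))) \<le> r * C * h" for n j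
    using bary_iterate_error[OF assms(1,2) C assms(4-6) h, of n j] unfolding x_def by (simp add: order_trans)
  have "continuous_on UNIV (\<lambda>v::real ^ 's. h *\<^sub>R v)" by (intro continuous_on_scaleR continuous_on_const continuous_on_id)
  then have cont: "continuous_on UNIV (\<lambda>v. f (h *\<^sub>R v))"
    by (rule continuous_on_compose2[OF is_norm_lipschitz_continuous[OF assms(2) C assms(4)]]) simp
  have "is_bary_limit a x (bary_limit a x)"
    unfolding x_def by (rule bary_limit_is_limit[OF assms(7,9)])
  from bary_limit_dist_le[OF this cont error]
  have "dist (bary_limit a x ((1 / h) *\<^sub>R t)) (f (h *\<^sub>R ((1 / h) *\<^sub>R t))) \<le> r * C * h" .
  then show "dist (bary_limit a (\<lambda>i. f (h *\<^sub>R vec_of_int i)) ((1 / h) *\<^sub>R t)) (f t) \<le> r * C * h"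
    using assms(8) unfolding x_def by simp
qed

end
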